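(* Let $D$ be a distribution over $\mathcal{X}\times\mathcal{Y}$ ($\mathcal{X}\subset\mathbb{R}^d$, $\mathcal{Y}=\{1,\dots,c\}$) that is $(k_1,\dots,k_n)$-separable with $\delta$-margin, and let $K=\prod_{s=1}^n k_s$. Then there exists a 4-layer network $g:\mathcal{X}\to\mathbb{R}^c$ of the form $$p^s(x)=\sum_{l=1}^{k_s} v_{s,l}\,\rho(u_s^Tx-\beta_{s,l})\ (s=1,\dots,n),\qquad g(x)=W^T\big(\rho(u^Tp(x)-\gamma_1),\dots,\rho(u^Tp(x)-\gamma_K)\big)^T,$$ where $p(x)=(p^1(x),\dots,p^n(x))^T$, $u_s\in\mathbb{R}^d$, $\beta_{s,l},v_{s,l}\in\mathbb{R}$, $u\in\mathbb{R}^n$, $\gamma_i\in\mathbb{R}$, $W\in\mathbb{R}^{K\times c}$ (so $n(d+1)+2\sum_{s=1}^n k_s+(c+1)\prod_{s=1}^n k_s$ parameters), which classifies perfectly: with probability $1$ over $(x,y)\sim D$, $y$ is the unique maximizer of $j\mapsto g_j(x)$ over $j\in\{1,\dots,c\}$.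
   Context: $\rho(t)=1/(1+e^{-t})$ is the sigmoid function. Definition ($(k_1,\dots,k_n)$-separable with $\delta$-margin): Let $\mathcal{X}\subset\mathbb{R}^d$, $\mathcal{Y}=\{1,\dots,c\}$. A distribution $D$ over $\mathcal{X}\times\mathcal{Y}$ is $(k_1,\dots,k_n)$-separable with $\delta$-margin ($\delta>0$) if there exist $a_1,\dots,a_n\in\mathbb{R}^d$ with $\|a_s\|_2=1$ and constants $b_{s,1}<b_{s,2}<\cdots<b_{s,k_s+1}$ for each $s\in\{1,\dots,n\}$ such that, for each multi-index $\mathbf{i}=(i_1,\dots,i_n)$ with $i_s\in\{1,\dots,k_s\}$ and $\mathcal{X}_{\mathbf{i}}=\{x\in\mathcal{X}: b_{s,i_s}+\delta<a_s^Tx<b_{s,i_s+1}-\delta \text{ for all } 1\le s\le n\}$: (i) there is $y_{\mathbf{i}}\in\mathcal{Y}$ with $\mathbb{P}_{(x,y)\sim D}(y=y_{\mathbf{i}}\mid x\in\mathcal{X}_{\mathbf{i}})=1$; (ii) $\mathbb{P}_{(x,y)\sim D}\big(x\in\bigcup_{\mathbf{i}}\mathcal{X}_{\mathbf{i}}\big)=1$. *)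

theory Defs
  imports "HOL-Probability.Probability"
begin

definition sigmoid :: "real \<Rightarrow> real" where
  "sigmoid t = 1 / (1 + exp (- t))"

definition multi_indices :: "nat \<Rightarrow> (nat \<Rightarrow> nat) \<Rightarrow> (nat \<Rightarrow> nat) set" where
  "multi_indices n k = PiE {1..n} (\<lambda>s. {1..k s})"

definition sep_cell ::
  "(real^'d) set \<Rightarrow> nat \<Rightarrow> (nat \<Rightarrow> real^'d) \<Rightarrow> (nat \<Rightarrow> nat \<Rightarrow> real) \<Rightarrow> real
   \<Rightarrow> (nat \<Rightarrow> nat) \<Rightarrow> (real^'d) set" where
  "sep_cell X n a b \<delta> i =
     {x \<in> X. \<forall>s\<in>{1..n}. b s (i s) + \<delta> < a s \<bullet> x \<and> a s \<bullet> x < b s (i s + 1) - \<delta>}"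

text \<open>Probability-one statements are expressed with AE;
  "P(y = y_i | x \<in> X_i) = 1" is read as "almost surely, x \<in> X_i implies y = y_i".\<close>
definition separable ::
  "((real^'d) \<times> nat) measure \<Rightarrow> (real^'d) set \<Rightarrow> nat \<Rightarrow> nat \<Rightarrow> (nat \<Rightarrow> nat) \<Rightarrow> real \<Rightarrow> bool" where
  "separable D X c n k \<delta> \<longleftrightarrow> \<delta> > 0 \<and>
     (\<exists>(a :: nat \<Rightarrow> real^'d) (b :: nat \<Rightarrow> nat \<Rightarrow> real).
        (\<forall>s\<in>{1..n}. norm (a s) = 1 \<and> strict_mono_on {1..k s + 1} (b s)) \<and>
        (\<forall>i\<in>multi_indices n k. \<exists>y\<in>{1..c}.
            AE z in D. fst z \<in> sep_cell X n a b \<delta> i \<longrightarrow> snd z = y) \<and>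
        (AE z in D. fst z \<in> (\<Union>i\<in>multi_indices n k. sep_cell X n a b \<delta> i)))"

definition net_p ::
  "(nat \<Rightarrow> nat) \<Rightarrow> (nat \<Rightarrow> real^'d) \<Rightarrow> (nat \<Rightarrow> nat \<Rightarrow> real) \<Rightarrow> (nat \<Rightarrow> nat \<Rightarrow> real)
   \<Rightarrow> nat \<Rightarrow> real^'d \<Rightarrow> real" where
  "net_p k us \<beta> v s x = (\<Sum>l=1..k s. v s l * sigmoid (us s \<bullet> x - \<beta> s l))"

definition net_g ::
  "nat \<Rightarrow> (nat \<Rightarrow> nat) \<Rightarrow> (nat \<Rightarrow> real^'d) \<Rightarrow> (nat \<Rightarrow> nat \<Rightarrow> real) \<Rightarrow> (nat \<Rightarrow> nat \<Rightarrow> real)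
   \<Rightarrow> (nat \<Rightarrow> real) \<Rightarrow> (nat \<Rightarrow> real) \<Rightarrow> (nat \<Rightarrow> nat \<Rightarrow> real) \<Rightarrow> nat \<Rightarrow> real^'d \<Rightarrow> real" where
  "net_g n k us \<beta> v u \<gamma> W j x =
     (\<Sum>i=1..(\<Prod>s=1..n. k s).
        W i j * sigmoid ((\<Sum>s=1..n. u s * net_p k us \<beta> v s x) - \<gamma> i))"

end

theory Submission
  imports Defs
begin

(* With a steep slope t, each sigmoid rho(t (a_s^T x - b_{s,l})) is close to the indicator of
   b_{s,l} < a_s^T x, so on the cell X_i the first layer computes p^s(x) ~ i_s.  Weighting p^s
   by the place values prod_{r<s} k_r turns p(x) into a number within 1/4 of the mixed-radix
   index m of the cell (up to a fixed shift).  The second layer, with thresholds at the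
   half-integers, then outputs the staircase rho(T (u^T p(x) - gamma_r)) ~ [r <= m + 1]; taking
   the columns of W to be the successive differences of the one-hot codes of the cell labels
   makes g(x) lie within 1/2 of the unit vector of the label y_i. *)

lemma sigmoid_pos: "0 < sigmoid t"
  unfolding sigmoid_def by (simp add: add_pos_pos)

lemma sigmoid_less_one: "sigmoid t < 1"
  unfolding sigmoid_def by (simp add: add_pos_pos)

lemma sigmoid_minus: "sigmoid (- t) = 1 - sigmoid t"
proof -
  have "0 < 1 + exp t" by (simp add: add_pos_pos)
  then show ?thesis unfolding sigmoid_def by (simp add: exp_minus field_simps)
qed

lemma sigmoid_mono: "a \<le> b \<Longrightarrow> sigmoid a \<le> sigmoid b"
  unfolding sigmoid_def by (simp add: frac_le add_pos_pos)

lemma sigmoid_tail_bound: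
  fixes C \<epsilon> :: real
  assumes "0 \<le> C" "0 < \<epsilon>"
  shows "\<exists>T\<ge>0. C * sigmoid (- T) < \<epsilon>"
proof -
  define T where "T = (C + 1) / \<epsilon>"
  have "T \<ge> 0" using assms by (simp add: T_def)
  have "T < exp T" using exp_ge_add_one_self[of T] by linarith
  then have "sigmoid (- T) < 1 / (1 + T)"
    unfolding sigmoid_def using \<open>T \<ge> 0\<close> by (intro divide_strict_left_mono) auto
  also have "\<dots> < \<epsilon> / (C + 1)"
    using assms by (simp add: T_def field_simps)
  finally have "C * sigmoid (- T) \<le> C * (\<epsilon> / (C + 1))"
    using assms(1) by (intro mult_left_mono) auto
  also have "\<dots> < \<epsilon>"
    using assms by (simp add: field_simps)
  finally show ?thesis using \<open>T \<ge> 0\<close> by blast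
qed

lemma abs_sigmoid_diff_step_le:
  assumes "P \<Longrightarrow> c \<le> z" and "\<not> P \<Longrightarrow> z \<le> - c"
  shows "\<bar>sigmoid z - (if P then 1 else 0)\<bar> \<le> sigmoid (- c)"
proof (cases P)
  case True
  then have "1 - sigmoid (- c) \<le> sigmoid z"
    using sigmoid_mono[OF assms(1)] sigmoid_minus[of c] by simp
  then show ?thesis using True sigmoid_less_one[of z] by simp
next
  case False
  then show ?thesis using sigmoid_mono[OF assms(2)] sigmoid_pos[of z] by simp
qed

lemma abs_sum_diff_le_card_mult:
  fixes f g :: "'a \<Rightarrow> real"
  assumes "\<And>l. l \<in> A \<Longrightarrow> \<bar>f l - g l\<bar> \<le> e"
  shows "\<bar>sum f A - sum g A\<bar> \<le> real (card A) * e"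
proof -
  have "\<bar>sum f A - sum g A\<bar> \<le> (\<Sum>l\<in>A. \<bar>f l - g l\<bar>)"
    by (metis sum_abs sum_subtractf)
  also have "\<dots> \<le> (\<Sum>l\<in>A. e)" using assms by (rule sum_mono)
  finally show ?thesis by simp
qed

lemma sum_if_le_atLeastAtMost:
  fixes f :: "nat \<Rightarrow> 'a::comm_monoid_add"
  assumes "m \<le> k"
  shows "(\<Sum>l=1..k. if l \<le> m then f l else 0) = (\<Sum>l=1..m. f l)"
proof -
  have "sum f ({1..k} \<inter> {..m}) = (\<Sum>l=1..k. if l \<in> {..m} then f l else 0)"
    by (rule sum.inter_restrict) simp
  then have "(\<Sum>l=1..k. if l \<le> m then f l else 0) = sum f ({1..k} \<inter> {..m})" by simp
  also have "{1..k} \<inter> {..m} = {1..m}" using assms by auto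
  finally show ?thesis .
qed

lemma sum_steep_sigmoids_count:
  fixes b :: "nat \<Rightarrow> real"
  assumes b: "strict_mono_on {1..k + 1} b" and i: "1 \<le> i" "i \<le> k"
    and z: "b i + \<delta> < z" "z < b (i + 1) - \<delta>" and t: "0 \<le> t"
  shows "\<bar>(\<Sum>l=1..k. sigmoid (t * (z - b l))) - real i\<bar> \<le> real k * sigmoid (- (t * \<delta>))"
proof -
  have "real i = (\<Sum>l=1..k. if l \<le> i then 1 else 0)"
    using sum_if_le_atLeastAtMost[of i k "\<lambda>_. 1 :: real"] i by simp
  moreover have "\<bar>sigmoid (t * (z - b l)) - (if l \<le> i then 1 else 0)\<bar> \<le> sigmoid (- (t * \<delta>))"
    if l: "l \<in> {1..k}" for l
  proof (rule abs_sigmoid_diff_step_le)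
    assume "l \<le> i"
    then have "b l \<le> b i" using strict_mono_on_leD[OF b] l i by auto
    then show "t * \<delta> \<le> t * (z - b l)" using z t by (intro mult_left_mono) auto
  next
    assume "\<not> l \<le> i"
    then have "b (i + 1) \<le> b l" using strict_mono_on_leD[OF b] l i by auto
    then have "t * (z - b l) \<le> t * (- \<delta>)" using z t by (intro mult_left_mono) auto
    then show "t * (z - b l) \<le> - (t * \<delta>)" by simp
  qed
  ultimately show ?thesis using abs_sum_diff_le_card_mult[of "{1..k}"] by simp
qed

text \<open>The thresholds r - 3/2 are half-integers, so q, within 1/4 of the integer m, stays
  at distance at least 1/4 from each of them and only the first m + 1 sigmoids fire.\<close>
lemma staircase_sum_approx:
  fixes G :: "nat \<Rightarrow> real" and q T :: real
  assumes G: "\<And>r. \<bar>G r - G (r - 1)\<bar> \<le> 1" and q: "\<bar>q - real m\<bar> < 1/4"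
    and m: "m < K" and T: "0 \<le> T"
  shows "\<bar>(\<Sum>r=1..K. (G r - G (r - 1)) * sigmoid (T * (q - (real r - 3/2)))) - (G (m + 1) - G 0)\<bar>
           \<le> real K * sigmoid (- (T / 4))"
proof -
  have "G (m + 1) - G 0 = (\<Sum>r=1..m + 1. G r - G (r - 1))"
    using sum_telescope''[of 0 "m + 1" G] by simp
  also have "\<dots> = (\<Sum>r=1..K. (G r - G (r - 1)) * (if r \<le> m + 1 then 1 else 0))"
    using sum_if_le_atLeastAtMost[of "m + 1" K "\<lambda>r. G r - G (r - 1)"] m
    by (simp add: if_distrib cong: if_cong)
  finally have step: "G (m + 1) - G 0 = \<dots>" .
  have "\<bar>(G r - G (r - 1)) * sigmoid (T * (q - (real r - 3/2)))
          - (G r - G (r - 1)) * (if r \<le> m + 1 then 1 else 0)\<bar> \<le> sigmoid (- (T / 4))" for r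
  proof -
    have "\<bar>sigmoid (T * (q - (real r - 3/2))) - (if r \<le> m + 1 then 1 else 0)\<bar> \<le> sigmoid (- (T / 4))"
    proof (rule abs_sigmoid_diff_step_le)
      assume "r \<le> m + 1"
      then have "1/4 \<le> q - (real r - 3/2)" using q by linarith
      then have "T * (1/4) \<le> T * (q - (real r - 3/2))" using T by (rule mult_left_mono)
      then show "T / 4 \<le> T * (q - (real r - 3/2))" by simp
    next
      assume "\<not> r \<le> m + 1"
      then have "q - (real r - 3/2) \<le> - (1/4)" using q by linarith
      then have "T * (q - (real r - 3/2)) \<le> T * (- (1/4))" using T by (rule mult_left_mono)
      then show "T * (q - (real r - 3/2)) \<le> - (T / 4)" by simp
    qed
    then have "\<bar>G r - G (r - 1)\<bar> * \<bar>sigmoid (T * (q - (real r - 3/2))) - (if r \<le> m + 1 then 1 else 0)\<bar>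
                 \<le> 1 * sigmoid (- (T / 4))"
      using G by (intro mult_mono) auto
    then show ?thesis by (simp add: abs_mult right_diff_distrib[symmetric])
  qed
  then show ?thesis unfolding step using abs_sum_diff_le_card_mult[of "{1..K}"] by simp
qed

definition mixed_radix :: "nat \<Rightarrow> (nat \<Rightarrow> nat) \<Rightarrow> (nat \<Rightarrow> nat) \<Rightarrow> nat" where
  "mixed_radix n k d = (\<Sum>s=1..n. d s * prod k {1..<s})"

lemma mixed_radix_Suc:
  "mixed_radix (Suc n) k d = mixed_radix n k d + d (Suc n) * prod k {1..<Suc n}"
  unfolding mixed_radix_def by (simp add: sum.cl_ivl_Suc)

lemma mixed_radix_less:
  assumes "\<forall>s\<in>{1..n}. d s < k s"
  shows "mixed_radix n k d < prod k {1..n}"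
  using assms
proof (induction n)
  case 0 then show ?case by (simp add: mixed_radix_def)
next
  case (Suc n)
  let ?P = "prod k {1..<Suc n}"
  have "\<forall>s\<in>{1..n}. d s < k s" using Suc.prems by simp
  then have "mixed_radix n k d < ?P"
    using Suc.IH by (simp add: atLeastLessThanSuc_atLeastAtMost)
  then have "mixed_radix (Suc n) k d < (d (Suc n) + 1) * ?P"
    by (simp add: mixed_radix_Suc)
  also have "\<dots> \<le> k (Suc n) * ?P"
    using Suc.prems by (intro mult_le_mono1) (simp add: Suc_le_eq)
  also have "\<dots> = prod k {1..Suc n}"
    by (simp add: prod.cl_ivl_Suc atLeastLessThanSuc_atLeastAtMost)
  finally show ?case .
qed

lemma mixed_radix_inj:
  assumes "\<forall>s\<in>{1..n}. d s < k s" "\<forall>s\<in>{1..n}. d' s < k s"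
    and "mixed_radix n k d = mixed_radix n k d'"
  shows "\<forall>s\<in>{1..n}. d s = d' s"
  using assms
proof (induction n)
  case 0 then show ?case by simp
next
  case (Suc n)
  let ?P = "prod k {1..<Suc n}"
  have digits: "\<forall>s\<in>{1..n}. d s < k s" "\<forall>s\<in>{1..n}. d' s < k s"
    using Suc.prems(1,2) by simp_all
  then have less: "mixed_radix n k d < ?P" "mixed_radix n k d' < ?P"
    using mixed_radix_less by (simp_all add: atLeastLessThanSuc_atLeastAtMost)
  have eq: "mixed_radix n k d + d (Suc n) * ?P = mixed_radix n k d' + d' (Suc n) * ?P"
    using Suc.prems(3) by (simp only: mixed_radix_Suc)
  \<comment> \<open>lower digits and top digit are remainder and quotient modulo the top place value\<close>
  have "mixed_radix n k d = mixed_radix n k d'"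
    using arg_cong[OF eq, of "\<lambda>a. a mod ?P"] less by (simp only: mod_mult_self1 mod_less)
  moreover have "d (Suc n) = d' (Suc n)"
    using arg_cong[OF eq, of "\<lambda>a. a div ?P"] less by simp
  ultimately have "\<forall>s\<in>{1..n}. d s = d' s" "d (Suc n) = d' (Suc n)"
    using Suc.IH digits by blast+
  then show ?case by (simp add: atLeastAtMostSuc_conv)
qed

definition cell_index :: "nat \<Rightarrow> (nat \<Rightarrow> nat) \<Rightarrow> (nat \<Rightarrow> nat) \<Rightarrow> nat" where
  "cell_index n k i = mixed_radix n k (\<lambda>s. i s - 1)"

lemma multi_indicesD: "i \<in> multi_indices n k \<Longrightarrow> s \<in> {1..n} \<Longrightarrow> 1 \<le> i s \<and> i s \<le> k s"
  unfolding multi_indices_def by auto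

lemma cell_index_less:
  "i \<in> multi_indices n k \<Longrightarrow> cell_index n k i < prod k {1..n}"
  unfolding cell_index_def by (rule mixed_radix_less) (fastforce dest: multi_indicesD)

lemma inj_on_cell_index: "inj_on (cell_index n k) (multi_indices n k)"
proof (rule inj_onI)
  fix i i' assume i: "i \<in> multi_indices n k" and i': "i' \<in> multi_indices n k"
    and "cell_index n k i = cell_index n k i'"
  then have "\<forall>s\<in>{1..n}. i s - 1 = i' s - 1"
    unfolding cell_index_def
    by (intro mixed_radix_inj[where k = k]) (fastforce dest: multi_indicesD)+
  then have "\<forall>s\<in>{1..n}. i s = i' s"
    using i i' by (fastforce dest: multi_indicesD)
  then show "i = i'"
    using i i' unfolding multi_indices_def by (auto intro: PiE_ext)
qed

lemma cell_index_eq_weighted_sum: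
  assumes "i \<in> multi_indices n k"
  shows "real (cell_index n k i) + (\<Sum>s=1..n. real (prod k {1..<s}))
           = (\<Sum>s=1..n. real (prod k {1..<s}) * real (i s))"
proof -
  have "real (cell_index n k i) = (\<Sum>s=1..n. real (prod k {1..<s}) * (real (i s) - 1))"
    unfolding cell_index_def mixed_radix_def of_nat_sum
    using assms by (intro sum.cong) (auto simp: of_nat_diff dest: multi_indicesD)
  moreover have "(\<Sum>s=1..n. real (prod k {1..<s}) * real (i s))
      = (\<Sum>s=1..n. real (prod k {1..<s}) * (real (i s) - 1) + real (prod k {1..<s}))"
    by (simp add: algebra_simps)
  ultimately show ?thesis by (simp add: sum.distrib)
qed

lemma net_p_steep_near_index:
  fixes a :: "nat \<Rightarrow> real^'d"
  assumes "strict_mono_on {1..k s + 1} (b s)" "1 \<le> i" "i \<le> k s"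
    and "b s i + \<delta> < a s \<bullet> x" "a s \<bullet> x < b s (i + 1) - \<delta>" "0 \<le> t"
  shows "\<bar>net_p k (\<lambda>s. t *\<^sub>R a s) (\<lambda>s l. t * b s l) (\<lambda>_ _. 1) s x - real i\<bar>
           \<le> real (k s) * sigmoid (- (t * \<delta>))"
proof -
  have "net_p k (\<lambda>s. t *\<^sub>R a s) (\<lambda>s l. t * b s l) (\<lambda>_ _. 1) s x
          = (\<Sum>l=1..k s. sigmoid (t * (a s \<bullet> x - b s l)))"
    unfolding net_p_def by (simp add: right_diff_distrib)
  then show ?thesis using sum_steep_sigmoids_count[OF assms] by simp
qed

lemma weighted_net_p_near_cell_index:
  fixes a :: "nat \<Rightarrow> real^'d"
  assumes b: "\<forall>s\<in>{1..n}. strict_mono_on {1..k s + 1} (b s)"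
    and i: "i \<in> multi_indices n k" and x: "x \<in> sep_cell X n a b \<delta> i" and t: "0 \<le> t"
  shows "\<bar>(\<Sum>s=1..n. real (prod k {1..<s}) * net_p k (\<lambda>s. t *\<^sub>R a s) (\<lambda>s l. t * b s l) (\<lambda>_ _. 1) s x)
            - (real (cell_index n k i) + (\<Sum>s=1..n. real (prod k {1..<s})))\<bar>
         \<le> (\<Sum>s=1..n. real (prod k {1..<s}) * real (k s)) * sigmoid (- (t * \<delta>))"
proof -
  let ?P = "\<lambda>s. real (prod k {1..<s})"
  let ?p = "\<lambda>s. net_p k (\<lambda>s. t *\<^sub>R a s) (\<lambda>s l. t * b s l) (\<lambda>_ _. 1) s x"
  let ?e = "sigmoid (- (t * \<delta>))"
  have near: "\<bar>?P s * (?p s - real (i s))\<bar> \<le> ?P s * (real (k s) * ?e)" if s: "s \<in> {1..n}" for s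
  proof -
    have "b s (i s) + \<delta> < a s \<bullet> x" "a s \<bullet> x < b s (i s + 1) - \<delta>"
      using x s unfolding sep_cell_def by auto
    with b s multi_indicesD[OF i s] t have "\<bar>?p s - real (i s)\<bar> \<le> real (k s) * ?e"
      by (intro net_p_steep_near_index) auto
    then show ?thesis by (metis abs_mult abs_of_nat mult_left_mono of_nat_0_le_iff)
  qed
  have "(\<Sum>s=1..n. ?P s * ?p s) - (real (cell_index n k i) + (\<Sum>s=1..n. ?P s))
      = (\<Sum>s=1..n. ?P s * (?p s - real (i s)))"
    unfolding cell_index_eq_weighted_sum[OF i] by (simp only: sum_subtractf[symmetric] right_diff_distrib)
  also have "\<bar>\<dots>\<bar> \<le> (\<Sum>s=1..n. \<bar>?P s * (?p s - real (i s))\<bar>)"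
    by (rule sum_abs)
  also have "\<dots> \<le> (\<Sum>s=1..n. ?P s * (real (k s) * ?e))"
    using near by (rule sum_mono)
  also have "\<dots> = (\<Sum>s=1..n. ?P s * real (k s)) * ?e"
    by (simp only: sum_distrib_right mult.assoc)
  finally show ?thesis .
qed

lemma net_g_classifies_cells:
  fixes a :: "nat \<Rightarrow> real^'d" and y :: "(nat \<Rightarrow> nat) \<Rightarrow> nat"
  assumes \<delta>: "0 < \<delta>" and b: "\<forall>s\<in>{1..n}. strict_mono_on {1..k s + 1} (b s)"
  obtains us \<beta> v u \<gamma> W where
    "\<And>i x j. i \<in> multi_indices n k \<Longrightarrow> x \<in> sep_cell X n a b \<delta> i \<Longrightarrow> j \<noteq> y i \<Longrightarrow>
       net_g n k us \<beta> v u \<gamma> W j x < net_g n k us \<beta> v u \<gamma> W (y i) x"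
proof -
  define P where "P s = real (prod k {1..<s})" for s
  define K where "K = prod k {1..n}"
  define S where "S = (\<Sum>s=1..n. P s * real (k s))"
  have "0 \<le> S" unfolding S_def P_def by (intro sum_nonneg mult_nonneg_nonneg of_nat_0_le_iff)
  then obtain T1 where T1: "0 \<le> T1" "S * sigmoid (- T1) < 1/4"
    using sigmoid_tail_bound[of S "1/4"] by auto
  obtain T2 where T2: "0 \<le> T2" "real K * sigmoid (- T2) < 1/2"
    using sigmoid_tail_bound[of "real K" "1/2"] by auto
  define t where "t = T1 / \<delta>"
  define T where "T = 4 * T2"
  \<comment> \<open>G j is a staircase whose step at the index of the cell i has height [y i = j]\<close>
  define G where
    "G j r = (if \<exists>i\<in>multi_indices n k. Suc (cell_index n k i) = r \<and> y i = j then 1 else 0 :: real)"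
    for j r
  define us :: "nat \<Rightarrow> real^'d" where "us = (\<lambda>s. t *\<^sub>R a s)"
  define \<beta> where "\<beta> = (\<lambda>s l. t * b s l)"
  define v :: "nat \<Rightarrow> nat \<Rightarrow> real" where "v = (\<lambda>_ _. 1)"
  define u where "u s = T * P s" for s
  define \<gamma> where "\<gamma> r = T * (real r - 3/2 + (\<Sum>s=1..n. P s))" for r
  define W where "W r j = G j r - G j (r - 1)" for r j
  have "net_g n k us \<beta> v u \<gamma> W j x < net_g n k us \<beta> v u \<gamma> W (y i) x"
    if i: "i \<in> multi_indices n k" and x: "x \<in> sep_cell X n a b \<delta> i" and j: "j \<noteq> y i" for i x j
  proof -
    define m where "m = cell_index n k i"
    define Q where "Q = (\<Sum>s=1..n. P s * net_p k us \<beta> v s x)"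
    define q where "q = Q - (\<Sum>s=1..n. P s)"
    have "t * \<delta> = T1" using \<delta> by (simp add: t_def)
    then have "\<bar>Q - (real m + (\<Sum>s=1..n. P s))\<bar> \<le> S * sigmoid (- T1)"
      using weighted_net_p_near_cell_index[OF b i x, of t] T1 \<delta>
      unfolding Q_def m_def S_def P_def us_def \<beta>_def v_def t_def by simp
    then have q: "\<bar>q - real m\<bar> < 1/4"
      using T1 unfolding q_def by linarith
    have "(\<Sum>s=1..n. u s * net_p k us \<beta> v s x) = T * Q"
      unfolding Q_def u_def by (simp add: sum_distrib_left mult.assoc)
    then have "(\<Sum>s=1..n. u s * net_p k us \<beta> v s x) - \<gamma> r = T * (q - (real r - 3/2))" for r
      unfolding q_def \<gamma>_def by (simp add: algebra_simps)
    then have net_g_eq: "net_g n k us \<beta> v u \<gamma> W j' x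
        = (\<Sum>r=1..K. (G j' r - G j' (r - 1)) * sigmoid (T * (q - (real r - 3/2))))" for j'
      unfolding net_g_def K_def W_def by simp
    have G_step: "G j' (m + 1) - G j' 0 = (if y i = j' then 1 else 0)" for j'
    proof -
      have "(\<exists>i'\<in>multi_indices n k. cell_index n k i' = m \<and> y i' = j') \<longleftrightarrow> y i = j'"
        using inj_onD[OF inj_on_cell_index _ _ i] i unfolding m_def by blast
      then show ?thesis unfolding G_def by simp
    qed
    have mK: "m < K" using cell_index_less[OF i] unfolding m_def K_def .
    have "0 \<le> T" using T2 by (simp add: T_def)
    have near: "\<bar>net_g n k us \<beta> v u \<gamma> W j' x - (if y i = j' then 1 else 0)\<bar> < 1/2" for j'
    proof -
      have "\<bar>G j' r - G j' (r - 1)\<bar> \<le> 1" for r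
        unfolding G_def by simp
      from staircase_sum_approx[where G = "G j'", OF this q mK \<open>0 \<le> T\<close>]
      have "\<bar>net_g n k us \<beta> v u \<gamma> W j' x - (if y i = j' then 1 else 0)\<bar> \<le> real K * sigmoid (- T2)"
        unfolding net_g_eq G_step by (simp add: T_def)
      then show ?thesis using T2 by linarith
    qed
    show ?thesis
      using near[of j, unfolded abs_less_iff] near[of "y i", unfolded abs_less_iff] j by simp
  qed
  then show thesis using that by blast
qed

theorem corollary2:
  fixes D :: "((real^'d) \<times> nat) measure" and X :: "(real^'d) set"
    and c n :: nat and k :: "nat \<Rightarrow> nat" and \<delta> :: real
  assumes "prob_space D"
    and "AE z in D. fst z \<in> X \<and> snd z \<in> {1..c}"
    and "separable D X c n k \<delta>"
  shows "\<exists>(us :: nat \<Rightarrow> real^'d) (\<beta> :: nat \<Rightarrow> nat \<Rightarrow> real) (v :: nat \<Rightarrow> nat \<Rightarrow> real)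
           (u :: nat \<Rightarrow> real) (\<gamma> :: nat \<Rightarrow> real) (W :: nat \<Rightarrow> nat \<Rightarrow> real).
           AE z in D. \<forall>j\<in>{1..c}. j \<noteq> snd z \<longrightarrow>
              net_g n k us \<beta> v u \<gamma> W j (fst z) < net_g n k us \<beta> v u \<gamma> W (snd z) (fst z)"
proof -
  from assms(3) obtain a b where \<delta>: "\<delta> > 0"
    and b: "\<forall>s\<in>{1..n}. strict_mono_on {1..k s + 1} (b s)"
    and label: "\<forall>i\<in>multi_indices n k. \<exists>y. AE z in D. fst z \<in> sep_cell X n a b \<delta> i \<longrightarrow> snd z = y"
    and cover: "AE z in D. fst z \<in> (\<Union>i\<in>multi_indices n k. sep_cell X n a b \<delta> i)"
    unfolding separable_def by fast
  obtain y where y: "\<forall>i\<in>multi_indices n k. AE z in D. fst z \<in> sep_cell X n a b \<delta> i \<longrightarrow> snd z = y i"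
    using bchoice[OF label] by blast
  obtain us \<beta> v u \<gamma> W where net: "\<And>i x j. i \<in> multi_indices n k \<Longrightarrow> x \<in> sep_cell X n a b \<delta> i \<Longrightarrow>
      j \<noteq> y i \<Longrightarrow> net_g n k us \<beta> v u \<gamma> W j x < net_g n k us \<beta> v u \<gamma> W (y i) x"
    using net_g_classifies_cells[OF \<delta> b] by blast
  have "finite (multi_indices n k)" unfolding multi_indices_def by (simp add: finite_PiE)
  then have "AE z in D. \<forall>i\<in>multi_indices n k. fst z \<in> sep_cell X n a b \<delta> i \<longrightarrow> snd z = y i"
    using y by (simp add: AE_ball_countable countable_finite)
  with cover have "AE z in D. \<forall>j\<in>{1..c}. j \<noteq> snd z \<longrightarrow>
      net_g n k us \<beta> v u \<gamma> W j (fst z) < net_g n k us \<beta> v u \<gamma> W (snd z) (fst z)"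
  proof eventually_elim
    case (elim z)
    then obtain i where "i \<in> multi_indices n k" "fst z \<in> sep_cell X n a b \<delta> i" "snd z = y i"
      by blast
    with net show ?case by metis
  qed
  then show ?thesis by blast
qed

end
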